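(* Let $\mathcal{P}$ be the set of sequences $\boldsymbol{b}=(b_k)_{k\geq1}$ with $b_k\in\{0,1,2,3\}$ such that $b_k=g_k$ for all but finitely many $k$, where $g_k=3$ for $k$ odd and $g_k=0$ for $k$ even. Let $H(a,b)=\max(a-3,-b)$ for $a,b\in\{0,1,2,3\}$, and for $\boldsymbol{b}\in\mathcal{P}$ put \[ \ell_H(\boldsymbol{b})=\sum_{k\geq1}\big(H(b_{k+1},b_k)-H(g_{k+1},g_k)\big),\qquad \ell(\boldsymbol{b})=2\ell_H(\boldsymbol{b})-(3-b_1), \] \[ |\boldsymbol{b}|=\sum_{k\geq1}(b_k-g_k)+2\sum_{k\geq1}k\big(H(b_{k+1},b_k)-H(g_{k+1},g_k)\big). \] Let $J(x,q)=\sum_{\boldsymbol{b}\in\mathcal{P}}x^{\ell(\boldsymbol{b})}q^{|\boldsymbol{b}|}$. Then \[ qJ(x,q) = (1+xq)(1+q-xq+x^2q^3)\,J(xq,q)-(1+xq^2)(1-x^2q^2)\,J(xq^{2},q). \]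
   Context: Here $\mathcal{P}$ is the Kyoto path realization of the $A^{(1)}_1$ highest weight crystal $B(3\Lambda_0)$ using the Kirillov–Reshetikhin perfect crystal $B^{1,3}=\{0,1,2,3\}$ (with $\tilde f_1: a\mapsto a+1$, $\tilde f_0:a\mapsto a-1$), whose ground-state path is $\cdots\otimes 0\otimes 3\otimes 0\otimes 3$; $|\boldsymbol{b}|\ge 0$ is the number of Kashiwara lowering operators needed to reach $\boldsymbol{b}$ from the ground-state path. $J$ is a formal power series in $q$ with Laurent polynomial coefficients in $x$. *)

theory Defs
  imports Main
begin

(* Paths b = (b_k)_{k>=1}, represented as functions nat => nat; the unused
   entry b 0 is normalised to 0 so that each path has a unique representative. *)

definition g :: "nat \<Rightarrow> nat" where
  "g k = (if odd k then 3 else 0)"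

definition H :: "nat \<Rightarrow> nat \<Rightarrow> int" where
  "H a b = max (int a - 3) (- int b)"

definition paths :: "(nat \<Rightarrow> nat) set" where
  "paths = {b. b 0 = 0 \<and> (\<forall>k\<ge>1. b k \<le> 3) \<and> finite {k. 1 \<le> k \<and> b k \<noteq> g k}}"

(* indices k >= 1 at which the summands of the (formally infinite) sums may be nonzero;
   all summands vanish outside this finite set *)
definition relidx :: "(nat \<Rightarrow> nat) \<Rightarrow> nat set" where
  "relidx b = {k. 1 \<le> k \<and> (b k \<noteq> g k \<or> b (k+1) \<noteq> g (k+1))}"

definition Hdiff :: "(nat \<Rightarrow> nat) \<Rightarrow> nat \<Rightarrow> int" where
  "Hdiff b k = H (b (k+1)) (b k) - H (g (k+1)) (g k)"

definition ellH :: "(nat \<Rightarrow> nat) \<Rightarrow> int" where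
  "ellH b = (\<Sum>k\<in>relidx b. Hdiff b k)"

definition ell :: "(nat \<Rightarrow> nat) \<Rightarrow> int" where
  "ell b = 2 * ellH b - (3 - int (b 1))"

definition wt :: "(nat \<Rightarrow> nat) \<Rightarrow> int" where
  "wt b = (\<Sum>k\<in>relidx b. int (b k) - int (g k))
          + 2 * (\<Sum>k\<in>relidx b. int k * Hdiff b k)"

(* J(x,q) = sum_{b in P} x^ell(b) q^|b| encoded by its coefficient array:
   Jc m n = coefficient of x^m q^n *)
definition Jc :: "int \<Rightarrow> int \<Rightarrow> int" where
  "Jc m n = int (card {b \<in> paths. ell b = m \<and> wt b = n})"

(* Bivariate Laurent polynomials in x,q as lists of monomials (c,i,j) = c x^i q^j;
   series as coefficient arrays int => int => int (x-exponent, q-exponent). *)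
type_synonym lpoly = "(int \<times> int \<times> int) list"
type_synonym series = "int \<Rightarrow> int \<Rightarrow> int"

definition ptimes :: "lpoly \<Rightarrow> lpoly \<Rightarrow> lpoly" where
  "ptimes P Q = [(c*d, i+k, j+l). (c,i,j) \<leftarrow> P, (d,k,l) \<leftarrow> Q]"

definition pmul :: "lpoly \<Rightarrow> series \<Rightarrow> series" where
  "pmul P F = (\<lambda>m n. (\<Sum>(c,i,j)\<leftarrow>P. c * F (m - i) (n - j)))"

(* substitution x := x q^s : coefficient of x^m q^n in F(x q^s, q) is F_{m, n - s m} *)
definition subst_xq :: "int \<Rightarrow> series \<Rightarrow> series" where
  "subst_xq s F = (\<lambda>m n. F m (n - s * m))"

end

theory Submission
  imports Defs "HOL-Library.FuncSet"
begin

text \<open>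
  With the energy e_k = |b_k + b_{k+1} - 3| one has 2 H(b_{k+1}, b_k) = b_{k+1} - b_k - 3 + e_k,
  so after telescoping \<open>\<ell>\<close>(b) = \<open>\<Sum>\<close>_k e_k and |b| = \<open>\<Sum>\<close>_k k e_k.
  Deleting b_1 and complementing the rest, b_k \<open>\<mapsto>\<close> 3 - b_{k+1}, is a bijection from the
  paths with b_1 = a onto all paths; it lowers \<open>\<ell>\<close> by e_1 = |b_1 - b'_1| and |b| by \<open>\<ell>\<close>(b).
  Hence the part A_a of J summing over the paths with b_1 = a satisfies
  A_a(x,q) = \<open>\<Sum>\<close>_d (xq)^|a-d| A_d(xq,q). Applying this twice to J(x,q) and once to J(xq,q)
  writes every term of the functional equation through the four series A_e(xq^2,q), and the
  equation becomes a polynomial identity in x, q for each e.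
\<close>

lemma sum_index_times_diff:
  fixes f :: "nat \<Rightarrow> 'a::comm_ring_1"
  assumes "1 \<le> N"
  shows "(\<Sum>k = 1..<N. of_nat k * (f (Suc k) - f k)) = (of_nat N - 1) * f N - (\<Sum>k = 1..<N. f k)"
  using assms by (induction N rule: dec_induct) (simp_all add: algebra_simps)

lemma sum_split_first_shift:
  fixes f :: "nat \<Rightarrow> 'a::comm_monoid_add"
  assumes "1 \<le> N"
  shows "(\<Sum>k = 1..<Suc N. f k) = f 1 + (\<Sum>k = 1..<N. f (Suc k))"
  using assms by (simp add: sum.atLeast_Suc_lessThan sum.shift_bounds_Suc_ivl del: sum.op_ivl_Suc)

lemma paths_iff:
  "b \<in> paths \<longleftrightarrow> b 0 = 0 \<and> (\<forall>k. b k \<le> 3) \<and> (\<exists>N\<ge>1. \<forall>k\<ge>N. b k = g k)"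
proof -
  have "finite {k. 1 \<le> k \<and> b k \<noteq> g k} \<longleftrightarrow> (\<exists>N\<ge>1. \<forall>k\<ge>N. b k = g k)"
  proof
    assume "finite {k. 1 \<le> k \<and> b k \<noteq> g k}"
    then obtain M where M: "\<And>k. 1 \<le> k \<Longrightarrow> b k \<noteq> g k \<Longrightarrow> k \<le> M"
      by (auto simp: finite_nat_set_iff_bounded_le)
    have "b k = g k" if "Suc M \<le> k" for k
      using M[of k] that by linarith
    then show "\<exists>N\<ge>1. \<forall>k\<ge>N. b k = g k" by (intro exI[of _ "Suc M"]) simp
  next
    assume "\<exists>N\<ge>1. \<forall>k\<ge>N. b k = g k"
    then obtain N where "\<forall>k\<ge>N. b k = g k" by blast
    then have "{k. 1 \<le> k \<and> b k \<noteq> g k} \<subseteq> {..N}"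
      by (auto simp: subset_iff) (meson nat_le_linear)
    then show "finite {k. 1 \<le> k \<and> b k \<noteq> g k}" by (rule finite_subset) simp
  qed
  moreover have "b 0 = 0 \<and> (\<forall>k\<ge>1. b k \<le> 3) \<longleftrightarrow> b 0 = 0 \<and> (\<forall>k. b k \<le> 3)"
    by (auto simp: Suc_le_eq) (metis neq0_conv zero_le)
  ultimately show ?thesis
    unfolding paths_def by blast
qed

lemma paths_le_3: "b \<in> paths \<Longrightarrow> b k \<le> 3"
  by (simp add: paths_iff)

lemma paths_eventually_ground:
  assumes "b \<in> paths"
  obtains N where "1 \<le> N" "\<forall>k\<ge>N. b k = g k"
  using assms by (auto simp: paths_iff)

definition energy :: "(nat \<Rightarrow> nat) \<Rightarrow> nat \<Rightarrow> int" where
  "energy b k = \<bar>int (b k) + int (b (Suc k)) - 3\<bar>"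

lemma energy_nonneg: "0 \<le> energy b k"
  by (simp add: energy_def)

lemma double_Hdiff:
  "2 * Hdiff b k = (int (b (Suc k)) - int (g (Suc k))) - (int (b k) - int (g k)) + energy b k"
  unfolding Hdiff_def H_def energy_def g_def by (cases "odd k") (simp_all, arith+)

lemma sum_relidx_eq:
  assumes "\<forall>k\<ge>N. b k = g k"
    and "\<And>k. b k = g k \<Longrightarrow> b (Suc k) = g (Suc k) \<Longrightarrow> f k = 0"
  shows "(\<Sum>k\<in>relidx b. f k) = (\<Sum>k = 1..<N. f k)"
proof (rule sum.mono_neutral_left)
  show "relidx b \<subseteq> {1..<N}"
    using assms(1) by (auto simp: relidx_def) (meson le_SucI not_less)+
qed (use assms(2) in \<open>auto simp: relidx_def\<close>)

lemma ell_eq_sum_energy: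
  assumes "1 \<le> N" "\<forall>k\<ge>N. b k = g k"
  shows "ell b = (\<Sum>k = 1..<N. energy b k)"
proof -
  define d where "d k = int (b k) - int (g k)" for k
  have "2 * ellH b = (\<Sum>k = 1..<N. 2 * Hdiff b k)"
    unfolding ellH_def sum_distrib_left
    by (rule sum_relidx_eq[OF assms(2)]) (simp add: Hdiff_def)
  also have "\<dots> = (\<Sum>k = 1..<N. d (Suc k) - d k) + (\<Sum>k = 1..<N. energy b k)"
    by (simp add: double_Hdiff d_def sum.distrib)
  also have "\<dots> = d N - d 1 + (\<Sum>k = 1..<N. energy b k)"
    using sum_Suc_diff'[OF assms(1), of d] by simp
  finally show ?thesis
    using assms(2) by (simp add: ell_def d_def g_def)
qed

lemma wt_eq_sum_weighted_energy:
  assumes "1 \<le> N" "\<forall>k\<ge>N. b k = g k"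
  shows "wt b = (\<Sum>k = 1..<N. int k * energy b k)"
proof -
  define d where "d k = int (b k) - int (g k)" for k
  have "wt b = (\<Sum>k = 1..<N. d k) + (\<Sum>k = 1..<N. int k * (2 * Hdiff b k))"
    unfolding wt_def sum_distrib_left
    by (simp add: sum_relidx_eq[OF assms(2)] Hdiff_def d_def mult.left_commute)
  also have "\<dots> = (\<Sum>k = 1..<N. d k) + (\<Sum>k = 1..<N. int k * (d (Suc k) - d k))
                  + (\<Sum>k = 1..<N. int k * energy b k)"
    by (simp add: double_Hdiff d_def ring_distribs sum.distrib)
  also have "\<dots> = (int N - 1) * d N + (\<Sum>k = 1..<N. int k * energy b k)"
    using sum_index_times_diff[OF assms(1), of d] by simp
  finally show ?thesis
    using assms(2) by (simp add: d_def)
qed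

text \<open>The complement \<open>3 - _\<close> compensates for the shift swapping the parity of the ground state.\<close>

definition path_tail :: "(nat \<Rightarrow> nat) \<Rightarrow> nat \<Rightarrow> nat" where
  "path_tail b k = (if k = 0 then 0 else 3 - b (Suc k))"

definition path_cons :: "nat \<Rightarrow> (nat \<Rightarrow> nat) \<Rightarrow> nat \<Rightarrow> nat" where
  "path_cons a c k = (if k = 0 then 0 else if k = 1 then a else 3 - c (k - 1))"

lemma path_tail_ground:
  "\<forall>k\<ge>N. b k = g k \<Longrightarrow> \<forall>k\<ge>N. path_tail b k = g k"
  by (auto simp: path_tail_def g_def)

lemma path_tail_in_paths:
  assumes "b \<in> paths"
  shows "path_tail b \<in> paths"
proof -
  obtain N where N: "1 \<le> N" "\<forall>k\<ge>N. b k = g k"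
    using paths_eventually_ground[OF assms] .
  show ?thesis
    unfolding paths_iff using N(1) path_tail_ground[OF N(2)] by (auto simp: path_tail_def)
qed

lemma path_cons_in_paths:
  assumes "c \<in> paths" "a \<le> 3"
  shows "path_cons a c \<in> paths"
proof -
  obtain N where N: "1 \<le> N" "\<forall>k\<ge>N. c k = g k"
    using paths_eventually_ground[OF assms(1)] .
  have "\<forall>k\<ge>Suc N. path_cons a c k = g k"
    using N by (auto simp: path_cons_def g_def)
  moreover have "path_cons a c 0 = 0" "\<forall>k. path_cons a c k \<le> 3"
    using assms(2) by (simp_all add: path_cons_def)
  ultimately show ?thesis
    unfolding paths_iff by (intro conjI exI[of _ "Suc N"]) auto
qed

lemma path_tail_cons: "c \<in> paths \<Longrightarrow> path_tail (path_cons a c) = c"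
  by (rule ext) (auto simp: path_tail_def path_cons_def paths_iff)

lemma path_cons_tail:
  assumes "b \<in> paths"
  shows "path_cons (b 1) (path_tail b) = b"
proof
  fix k
  show "path_cons (b 1) (path_tail b) k = b k"
  proof (cases "k \<le> 1")
    case True
    then show ?thesis
      using assms by (auto simp: path_cons_def paths_iff le_Suc_eq)
  next
    case False
    then show ?thesis
      using paths_le_3[OF assms, of k] by (simp add: path_cons_def path_tail_def)
  qed
qed

lemma energy_path_tail:
  "b \<in> paths \<Longrightarrow> 1 \<le> k \<Longrightarrow> energy (path_tail b) k = energy b (Suc k)"
  using paths_le_3[of b "Suc k"] paths_le_3[of b "Suc (Suc k)"]
  by (simp add: energy_def path_tail_def abs_minus_commute)

lemma energy_first: "b \<in> paths \<Longrightarrow> energy b 1 = \<bar>int (b 1) - int (path_tail b 1)\<bar>"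
  using paths_le_3[of b 2] by (simp add: energy_def path_tail_def numeral_2_eq_2)


lemma path_tail_stats:
  assumes b: "b \<in> paths"
  shows "ell (path_tail b) = ell b - energy b 1" and "wt (path_tail b) = wt b - ell b"
proof -
  obtain N where N: "1 \<le> N" "\<forall>k\<ge>N. b k = g k"
    using paths_eventually_ground[OF b] .
  have N': "\<forall>k\<ge>Suc N. b k = g k"
    using N(2) by simp
  have tail_sum: "(\<Sum>k = 1..<N. f k (energy (path_tail b) k)) = (\<Sum>k = 1..<N. f k (energy b (Suc k)))"
    for f :: "nat \<Rightarrow> int \<Rightarrow> int"
    by (rule sum.cong) (simp_all add: energy_path_tail[OF b])
  have ell_b: "ell b = energy b 1 + (\<Sum>k = 1..<N. energy b (Suc k))"
    by (rule trans[OF ell_eq_sum_energy[OF _ N'] sum_split_first_shift[OF N(1)]]) simp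
  have "ell (path_tail b) = (\<Sum>k = 1..<N. energy b (Suc k))"
    using ell_eq_sum_energy[OF N(1) path_tail_ground[OF N(2)]] tail_sum[of "\<lambda>_ x. x"] by simp
  then show "ell (path_tail b) = ell b - energy b 1"
    using ell_b by simp
  have "wt b = int 1 * energy b 1 + (\<Sum>k = 1..<N. int (Suc k) * energy b (Suc k))"
    by (rule trans[OF wt_eq_sum_weighted_energy[OF _ N'] sum_split_first_shift[OF N(1)]]) simp
  then have "wt b - ell b = (\<Sum>k = 1..<N. int k * energy b (Suc k))"
    using ell_b by (simp add: ring_distribs sum.distrib)
  moreover have "wt (path_tail b) = (\<Sum>k = 1..<N. int k * energy b (Suc k))"
    using wt_eq_sum_weighted_energy[OF N(1) path_tail_ground[OF N(2)]]
      tail_sum[of "\<lambda>k x. int k * x"] by simp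
  ultimately show "wt (path_tail b) = wt b - ell b"
    by simp
qed

lemma path_cons_stats:
  assumes "c \<in> paths" "a \<le> 3"
  shows "ell (path_cons a c) = ell c + \<bar>int a - int (c 1)\<bar>"
    and "wt (path_cons a c) = wt c + ell c + \<bar>int a - int (c 1)\<bar>"
proof -
  have b: "path_cons a c \<in> paths"
    using path_cons_in_paths[OF assms] .
  have tail: "path_tail (path_cons a c) = c"
    using path_tail_cons[OF assms(1)] .
  have "energy (path_cons a c) 1 = \<bar>int a - int (c 1)\<bar>"
    using energy_first[OF b] tail by (simp add: path_cons_def)
  then show "ell (path_cons a c) = ell c + \<bar>int a - int (c 1)\<bar>"
    and "wt (path_cons a c) = wt c + ell c + \<bar>int a - int (c 1)\<bar>"
    using path_tail_stats[OF b] tail by simp_all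
qed

lemma index_le_wt:
  assumes b: "b \<in> paths" and k: "1 \<le> k" "b k \<noteq> g k"
  shows "int k \<le> wt b"
proof -
  define D where "D = {j. 1 \<le> j \<and> b j \<noteq> g j}"
  have "finite D" "k \<in> D"
    using b k by (simp_all add: paths_def D_def)
  define K where "K = Max D"
  have "K \<in> D" "k \<le> K"
    using \<open>finite D\<close> \<open>k \<in> D\<close> by (auto simp: K_def intro: Max_in)
  then have K: "1 \<le> K" "b K \<noteq> g K" "k \<le> K"
    by (simp_all add: D_def)
  have "b j = g j" if "K < j" for j
  proof (rule ccontr)
    assume "b j \<noteq> g j"
    then have "j \<in> D"
      using K(1) that by (simp add: D_def)
    then show False
      using Max_ge[OF \<open>finite D\<close>] that by (fastforce simp: K_def)
  qed
  then have "energy b K = \<bar>int (b K) - int (g K)\<bar>"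
    by (simp add: energy_def g_def)
  then have "1 \<le> energy b K"
    using K(2) by (cases "b K < g K") auto
  then have "int k \<le> int K * energy b K"
    using K(3) mult_le_cancel_left1[of "int K" "energy b K"] by simp
  also have "\<dots> \<le> (\<Sum>j = 1..<Suc K. int j * energy b j)"
    using K(1) by (intro member_le_sum) (auto intro: mult_nonneg_nonneg energy_nonneg)
  also have "\<dots> = wt b"
    using \<open>\<And>j. K < j \<Longrightarrow> b j = g j\<close>
    by (intro wt_eq_sum_weighted_energy[symmetric]) auto
  finally show ?thesis .
qed


lemma finite_eventually_ground:
  "finite {b :: nat \<Rightarrow> nat. (\<forall>k. b k \<le> 3) \<and> (\<forall>k>N. b k = g k)}" (is "finite ?S")
proof (rule finite_subset)
  let ?ext = "\<lambda>f k. if k \<le> N then f k else g k"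
  show "?S \<subseteq> ?ext ` (PiE {..N} (\<lambda>_. {..3}))"
  proof
    fix b assume b: "b \<in> ?S"
    then have "b = ?ext (restrict b {..N})"
      by (auto simp: not_le)
    moreover have "restrict b {..N} \<in> PiE {..N} (\<lambda>_. {..3})"
      using b by auto
    ultimately show "b \<in> ?ext ` (PiE {..N} (\<lambda>_. {..3}))"
      by blast
  qed
  show "finite (?ext ` (PiE {..N} (\<lambda>_. {..3})))"
    by (intro finite_imageI finite_PiE) auto
qed

lemma finite_paths_wt: "finite {b \<in> paths. wt b = n}"
proof (rule finite_subset[OF _ finite_eventually_ground[of "nat n"]])
  show "{b \<in> paths. wt b = n} \<subseteq> {b. (\<forall>k. b k \<le> 3) \<and> (\<forall>k>nat n. b k = g k)}"
  proof (intro subsetI CollectI conjI allI impI)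
    fix b k assume b: "b \<in> {b \<in> paths. wt b = n}"
    then show "b k \<le> 3"
      by (simp add: paths_le_3)
    assume "nat n < k"
    then show "b k = g k"
      using b index_le_wt[of b k] by fastforce
  qed
qed

definition paths_from :: "nat \<Rightarrow> int \<Rightarrow> int \<Rightarrow> (nat \<Rightarrow> nat) set" where
  "paths_from a m n = {b \<in> paths. b 1 = a \<and> ell b = m \<and> wt b = n}"

definition Jc_from :: "nat \<Rightarrow> int \<Rightarrow> int \<Rightarrow> int" where
  "Jc_from a m n = int (card (paths_from a m n))"

lemma finite_paths_from: "finite (paths_from a m n)"
  by (rule finite_subset[OF _ finite_paths_wt[of n]]) (auto simp: paths_from_def)

lemma card_UN_paths_from:
  "card (\<Union>d<4. paths_from d (f d) n) = (\<Sum>d<4. card (paths_from d (f d) n))"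
  by (rule card_UN_disjoint) (simp, simp add: finite_paths_from, fastforce simp: paths_from_def)

lemma Jc_eq_sum_Jc_from: "Jc m n = (\<Sum>a<4. Jc_from a m n)"
proof -
  have "{b \<in> paths. ell b = m \<and> wt b = n} = (\<Union>a<4. paths_from a m n)"
  proof (intro equalityI subsetI)
    fix b assume "b \<in> {b \<in> paths. ell b = m \<and> wt b = n}"
    moreover have "b 1 < 4" if "b \<in> paths"
      using paths_le_3[OF that, of 1] by simp
    ultimately show "b \<in> (\<Union>a<4. paths_from a m n)"
      by (auto simp: paths_from_def)
  qed (auto simp: paths_from_def)
  then show ?thesis
    unfolding Jc_def Jc_from_def using card_UN_paths_from[of "\<lambda>_. m"] by simp
qed

lemma paths_from_eq_image_path_cons:
  assumes "a \<le> 3"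
  shows "paths_from a m n = path_cons a ` (\<Union>d<4. paths_from d (m - \<bar>int a - int d\<bar>) (n - m))"
proof
  show "paths_from a m n \<subseteq> path_cons a ` (\<Union>d<4. paths_from d (m - \<bar>int a - int d\<bar>) (n - m))"
  proof
    fix b assume "b \<in> paths_from a m n"
    then have b: "b \<in> paths" "b 1 = a" "ell b = m" "wt b = n"
      by (auto simp: paths_from_def)
    have "path_tail b \<in> paths_from (path_tail b 1) (m - \<bar>int a - int (path_tail b 1)\<bar>) (n - m)"
      using path_tail_in_paths[OF b(1)] path_tail_stats[OF b(1)] energy_first[OF b(1)] b
      by (simp add: paths_from_def)
    moreover have "path_tail b 1 < 4"
      by (simp add: path_tail_def)
    moreover have "b = path_cons a (path_tail b)"
      using path_cons_tail[OF b(1)] b(2) by simp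
    ultimately show "b \<in> path_cons a ` (\<Union>d<4. paths_from d (m - \<bar>int a - int d\<bar>) (n - m))"
      by blast
  qed
  show "path_cons a ` (\<Union>d<4. paths_from d (m - \<bar>int a - int d\<bar>) (n - m)) \<subseteq> paths_from a m n"
  proof
    fix b assume "b \<in> path_cons a ` (\<Union>d<4. paths_from d (m - \<bar>int a - int d\<bar>) (n - m))"
    then obtain c where c: "c \<in> paths" "ell c = m - \<bar>int a - int (c 1)\<bar>" "wt c = n - m"
      and b: "b = path_cons a c"
      by (auto simp: paths_from_def)
    have "b 1 = a"
      using b by (simp add: path_cons_def)
    then show "b \<in> paths_from a m n"
      using path_cons_stats[OF c(1) assms] path_cons_in_paths[OF c(1) assms] c b
      by (simp add: paths_from_def)
  qed
qed

lemma Jc_from_rec: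
  assumes "a \<le> 3"
  shows "Jc_from a m n = (\<Sum>d<4. Jc_from d (m - \<bar>int a - int d\<bar>) (n - m))"
proof -
  have "inj_on (path_cons a) paths"
    by (rule inj_on_inverseI[of _ path_tail]) (rule path_tail_cons)
  then have "inj_on (path_cons a) (\<Union>d<4. paths_from d (m - \<bar>int a - int d\<bar>) (n - m))"
    by (rule inj_on_subset) (auto simp: paths_from_def)
  then show ?thesis
    unfolding Jc_from_def paths_from_eq_image_path_cons[OF assms]
    by (simp add: card_image card_UN_paths_from)
qed


lemma Jc_one_step:
  "Jc m n = (\<Sum>a<4. \<Sum>d<4. Jc_from d (m - \<bar>int a - int d\<bar>) (n - m))"
  unfolding Jc_eq_sum_Jc_from by (intro sum.cong refl) (simp add: Jc_from_rec)

lemma Jc_two_steps: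
  "Jc m n = (\<Sum>a<4. \<Sum>d<4. \<Sum>e<4.
     Jc_from e (m - \<bar>int a - int d\<bar> - \<bar>int d - int e\<bar>) (n - m - (m - \<bar>int a - int d\<bar>)))"
  unfolding Jc_one_step by (intro sum.cong refl) (simp add: Jc_from_rec)

lemma subst_xq_1_Jc:
  "subst_xq 1 Jc m n = (\<Sum>a<4. \<Sum>d<4. Jc_from d (m - \<bar>int a - int d\<bar>) (n - 2 * m))"
  unfolding subst_xq_def Jc_one_step by simp

lemma subst_xq_2_Jc: "subst_xq 2 Jc m n = (\<Sum>e<4. Jc_from e m (n - 2 * m))"
  unfolding subst_xq_def Jc_eq_sum_Jc_from by simp

theorem mainTheorem4:
  shows "(\<forall>n. finite {b \<in> paths. wt b = n})
    \<and> pmul [(1,0,1)] Jc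
      = (\<lambda>m n. pmul (ptimes [(1,0,0),(1,1,1)] [(1,0,0),(1,0,1),(-1,1,1),(1,2,3)])
                      (subst_xq 1 Jc) m n
               - pmul (ptimes [(1,0,0),(1,1,2)] [(1,0,0),(-1,2,2)])
                      (subst_xq 2 Jc) m n)"
proof (intro conjI allI ext)
  show "finite {b \<in> paths. wt b = n}" for n
    by (rule finite_paths_wt)
  fix m n :: int
  \<comment> \<open>Recentring every coefficient at \<open>(m, n - 2m)\<close> makes equal terms syntactically equal.\<close>
  define Y where "Y e p r = Jc_from e (m - p) (n - 2 * m + r)" for e p r
  have recentre: "Jc_from e m' n' = Y e (m - m') (n' - n + 2 * m)" for e m' n'
    by (simp add: Y_def)
  have four: "{..<4::nat} = {0, 1, 2, 3}"
    by auto
  have "pmul [(1,0,1)] Jc m n = Jc m (n - 1)"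
    by (simp add: pmul_def)
  then show "pmul [(1,0,1)] Jc m n
    = pmul (ptimes [(1,0,0),(1,1,1)] [(1,0,0),(1,0,1),(-1,1,1),(1,2,3)]) (subst_xq 1 Jc) m n
      - pmul (ptimes [(1,0,0),(1,1,2)] [(1,0,0),(-1,2,2)]) (subst_xq 2 Jc) m n"
    by (simp add: pmul_def ptimes_def subst_xq_1_Jc subst_xq_2_Jc four)
      (simp add: Jc_two_steps four recentre)
qed

end
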